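(* For every hypothesis class $\mathcal{H}\subseteq\{0,1\}^{\mathcal{X}}$, $\mathtt{CD}(\mathcal{H})<\infty$ if and only if $\mathtt{LD}(\mathcal{H})<\infty$.
   Context: A dataset of size $m$ is $S=((x_1,y_1),\dots,(x_m,y_m))\in(\mathcal{X}\times\{0,1\})^m$; it is $\mathcal{H}$-realizable if some $h\in\mathcal{H}$ satisfies $h(x_i)=y_i$ for all $i$. $G_m(\mathcal{H})$ is the graph on realizable datasets of size $m$ with $S,S'$ adjacent iff there is $x$ with $(x,0)$ appearing in $S$ and $(x,1)$ appearing in $S'$; $\omega_m$ is its clique number; $\mathtt{CD}(\mathcal{H})=\sup\{m:\omega_m=2^m\}$. A mistake tree is a complete binary tree whose internal nodes are labeled by points of $\mathcal{X}$, each internal node having one outgoing edge labeled $0$ and one labeled $1$; a root-to-leaf path yields the sequence of (node label, edge label) pairs. $\mathcal{H}$ shatters the tree if every root-to-leaf path is realizable by $\mathcal{H}$. $\mathtt{LD}(\mathcal{H})$ is the largest depth of a complete mistake tree shattered by $\mathcal{H}$ ($\infty$ if unbounded). *)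

theory Defs
  imports Main "HOL-Library.Extended_Nat"
begin

(* Labels: False = 0, True = 1.  A hypothesis class is a set of functions 'x => bool. *)

type_synonym 'x dataset = "('x \<times> bool) list"

definition realizable :: "('x \<Rightarrow> bool) set \<Rightarrow> ('x \<times> bool) list \<Rightarrow> bool" where
  "realizable H S \<longleftrightarrow> (\<exists>h\<in>H. \<forall>(x, y)\<in>set S. h x = y)"

definition vertices :: "('x \<Rightarrow> bool) set \<Rightarrow> nat \<Rightarrow> 'x dataset set" where
  "vertices H m = {S. length S = m \<and> realizable H S}"

definition adj :: "'x dataset \<Rightarrow> 'x dataset \<Rightarrow> bool" where
  "adj S S' \<longleftrightarrow> (\<exists>x. ((x, False) \<in> set S \<and> (x, True) \<in> set S') \<or>
                     ((x, True) \<in> set S \<and> (x, False) \<in> set S'))"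

definition is_clique :: "('x \<Rightarrow> bool) set \<Rightarrow> nat \<Rightarrow> 'x dataset set \<Rightarrow> bool" where
  "is_clique H m C \<longleftrightarrow> C \<subseteq> vertices H m \<and> (\<forall>S\<in>C. \<forall>S'\<in>C. S \<noteq> S' \<longrightarrow> adj S S')"

definition omega :: "('x \<Rightarrow> bool) set \<Rightarrow> nat \<Rightarrow> enat" where
  "omega H m = Sup {enat (card C) | C. finite C \<and> is_clique H m C}"

definition CD :: "('x \<Rightarrow> bool) set \<Rightarrow> enat" where
  "CD H = Sup {enat m | m. omega H m = enat (2 ^ m)}"

(* mistake trees: Node x t0 t1, edge 0 leads to t0, edge 1 leads to t1 *)
datatype 'x mtree = Leaf | Node 'x "'x mtree" "'x mtree"

fun complete_depth :: "'x mtree \<Rightarrow> nat \<Rightarrow> bool" where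
  "complete_depth Leaf d = (d = 0)"
| "complete_depth (Node x t0 t1) d =
     (\<exists>d'. d = Suc d' \<and> complete_depth t0 d' \<and> complete_depth t1 d')"

fun paths :: "'x mtree \<Rightarrow> ('x \<times> bool) list set" where
  "paths Leaf = {[]}"
| "paths (Node x t0 t1) = ((#) (x, False)) ` paths t0 \<union> ((#) (x, True)) ` paths t1"

definition shatters_tree :: "('x \<Rightarrow> bool) set \<Rightarrow> 'x mtree \<Rightarrow> bool" where
  "shatters_tree H t \<longleftrightarrow> (\<forall>p\<in>paths t. realizable H p)"

definition LD :: "('x \<Rightarrow> bool) set \<Rightarrow> enat" where
  "LD H = Sup {enat d | d. \<exists>t. complete_depth t d \<and> shatters_tree H t}"

end

theory Submission
  imports Defs
begin

text \<open>
  The root-to-leaf paths of a shattered mistake tree of depth \<open>d\<close> form a clique of \<open>2^d\<close>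
  realizable datasets of size \<open>d\<close>, and no clique of \<open>G\<^sub>d\<close> is larger: pairwise conflicting
  datasets of size at most \<open>d\<close> are consistent with disjoint sets of labelings of the points
  involved, each of relative size at least \<open>2^-d\<close>. Hence every depth of a shattered tree
  is counted by \<open>CD\<close>.

  Conversely, suppose \<open>H\<close> shatters no tree of depth \<open>d + 1\<close>. Fix a member \<open>T\<close> of a clique and split
  the clique according to the values its realizers take on the points of \<open>T\<close>. Every other member
  conflicts with \<open>T\<close> at one of these points, so inside each part the datasets have one point fewer
  to spend; and at any point where both restrictions of \<open>H\<close> shatter depth \<open>d\<close>, \<open>H\<close> would shatter
  depth \<open>d + 1\<close>. This Sauer--Shelah type recursion bounds the cliques of \<open>G\<^sub>m\<close> by \<open>(m\<^sup>2 + 1)^d\<close>,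
  which is eventually smaller than \<open>2^m\<close>, so \<open>CD\<close> is finite.
\<close>

definition shatters_depth :: "('x \<Rightarrow> bool) set \<Rightarrow> nat \<Rightarrow> bool" where
  "shatters_depth H d \<longleftrightarrow> (\<exists>t. complete_depth t d \<and> shatters_tree H t)"

lemma realizable_mono: "H \<subseteq> H' \<Longrightarrow> realizable H p \<Longrightarrow> realizable H' p"
  unfolding realizable_def by blast

lemma shatters_depth_mono: "H \<subseteq> H' \<Longrightarrow> shatters_depth H d \<Longrightarrow> shatters_depth H' d"
  unfolding shatters_depth_def shatters_tree_def using realizable_mono by blast

lemma shatters_depth_0: "H \<noteq> {} \<Longrightarrow> shatters_depth H 0"
  unfolding shatters_depth_def shatters_tree_def
  by (rule exI[of _ Leaf]) (auto simp: realizable_def)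

lemma in_paths_NodeE:
  assumes "p \<in> paths (Node x t0 t1)"
  obtains b q where "p = (x, b) # q" "q \<in> paths (if b then t1 else t0)"
  using assms by (auto; metis)

lemma shatters_depth_SucI:
  assumes "\<And>b. shatters_depth {h\<in>H. h x = b} d"
  shows "shatters_depth H (Suc d)"
proof -
  obtain t where t: "\<And>b. complete_depth (t b) d" "\<And>b. shatters_tree {h\<in>H. h x = b} (t b)"
    using assms unfolding shatters_depth_def by metis
  have "realizable H p" if "p \<in> paths (Node x (t False) (t True))" for p
  proof -
    from that obtain b q where p: "p = (x, b) # q" and q: "q \<in> paths (t b)"
      by (elim in_paths_NodeE) (metis (full_types))
    have "realizable {h\<in>H. h x = b} q"
      using t(2) q unfolding shatters_tree_def by blast
    then show ?thesis using p unfolding realizable_def by auto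
  qed
  then show ?thesis
    using t(1) unfolding shatters_depth_def shatters_tree_def
    by (intro exI[of _ "Node x (t False) (t True)"]) auto
qed

lemma length_paths: "complete_depth t d \<Longrightarrow> p \<in> paths t \<Longrightarrow> length p = d"
  by (induction t arbitrary: d p) auto

lemma card_paths: "complete_depth t d \<Longrightarrow> finite (paths t) \<and> card (paths t) = 2 ^ d"
proof (induction t arbitrary: d)
  case (Node x t0 t1)
  then obtain d' where d: "d = Suc d'" and
    IH: "finite (paths t0)" "card (paths t0) = 2 ^ d'" "finite (paths t1)" "card (paths t1) = 2 ^ d'"
    by auto
  have "(#) (x, False) ` paths t0 \<inter> (#) (x, True) ` paths t1 = {}" by auto
  with IH show ?case by (simp add: d card_Un_disjoint card_image)
qed simp

lemma paths_pairwise_adj: "p \<in> paths t \<Longrightarrow> q \<in> paths t \<Longrightarrow> p \<noteq> q \<Longrightarrow> adj p q"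
proof (induction t arbitrary: p q)
  case (Node x t0 t1)
  obtain b c p' q' where
    p: "p = (x, b) # p'" "p' \<in> paths (if b then t1 else t0)" and
    q: "q = (x, c) # q'" "q' \<in> paths (if c then t1 else t0)"
    using Node.prems(1,2) by (elim in_paths_NodeE)
  show ?case
  proof (cases "b = c")
    case True
    with Node p q have "adj p' q'" by (cases b) auto
    then show ?thesis using p q unfolding adj_def by auto
  next
    case False
    then show ?thesis using p q unfolding adj_def by (cases b) auto
  qed
qed simp

lemma shatters_depth_clique:
  assumes "shatters_depth H d"
  obtains C where "finite C" "is_clique H d C" "card C = 2 ^ d"
proof -
  obtain t where t: "complete_depth t d" "shatters_tree H t"
    using assms unfolding shatters_depth_def by blast
  have "is_clique H d (paths t)"
    using length_paths[OF t(1)] t(2) paths_pairwise_adj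
    unfolding is_clique_def vertices_def shatters_tree_def by auto
  with card_paths[OF t(1)] show ?thesis using that by blast
qed

lemma card_consistent_subsets:
  assumes X: "finite X" "fst ` set S \<subseteq> X" and h: "\<forall>(x, y)\<in>set S. h x = y"
  shows "2 ^ (card X - length S) \<le> card {A. A \<subseteq> X \<and> (\<forall>(x, y)\<in>set S. (x \<in> A) = y)}"
    (is "_ \<le> card ?E")
proof -
  define D where "D = fst ` set S"
  define Tr where "Tr = {x. (x, True) \<in> set S}"
  have D_X: "D \<subseteq> X" and Tr_D: "Tr \<subseteq> D" using X(2) unfolding Tr_def D_def by force+
  have Tr_iff: "(x \<in> Tr) = y" if "(x, y) \<in> set S" for x y
  proof -
    have "h x = y" "(x, True) \<in> set S \<Longrightarrow> h x" using h that by auto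
    then show ?thesis using that unfolding Tr_def by (cases y) auto
  qed
  have "Tr \<union> B \<in> ?E" if B: "B \<subseteq> X - D" for B
  proof -
    have "(x \<in> Tr \<union> B) = y" if "(x, y) \<in> set S" for x y
    proof -
      have "x \<in> D" using that unfolding D_def by force
      then show ?thesis using B Tr_iff[OF that] by blast
    qed
    moreover have "Tr \<union> B \<subseteq> X" using B D_X Tr_D by blast
    ultimately show ?thesis by auto
  qed
  then have sub: "(\<union>) Tr ` Pow (X - D) \<subseteq> ?E" by blast
  have "card D \<le> length S"
    unfolding D_def using card_image_le card_length le_trans by blast
  then have "card X - length S \<le> card (X - D)"
    using X(1) D_X by (simp add: card_Diff_subset finite_subset)
  then have "2 ^ (card X - length S) \<le> card (Pow (X - D))"
    using X(1) by (simp add: card_Pow)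
  also have "\<dots> = card ((\<union>) Tr ` Pow (X - D))"
    using Tr_D by (intro card_image[symmetric] inj_onI) blast
  also have "\<dots> \<le> card ?E"
    using sub X(1) by (intro card_mono) auto
  finally show ?thesis .
qed

lemma adj_imp_realizers_differ:
  assumes "adj S T" "\<forall>(x, y)\<in>set S. f x = y" "\<forall>(x, y)\<in>set T. g x = y"
  shows "\<exists>x\<in>fst ` set S \<inter> fst ` set T. f x \<noteq> g x"
proof -
  obtain x b where "(x, b) \<in> set S" "(x, \<not> b) \<in> set T"
    using assms(1) unfolding adj_def by (metis (full_types))
  moreover from this have "f x = b" "g x = (\<not> b)" using assms(2,3) by auto
  ultimately show ?thesis by force
qed

lemma card_clique_le_pow:
  assumes cl: "is_clique H m C" and fin: "finite C"
  shows "card C \<le> 2 ^ m"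
proof -
  define X where "X = (\<Union>S\<in>C. fst ` set S)"
  define E where "E S = {A. A \<subseteq> X \<and> (\<forall>(x, y)\<in>set S. (x \<in> A) = y)}" for S :: "'a dataset"
  have fin_X: "finite X" unfolding X_def using fin by auto
  have fin_E: "finite (E S)" for S unfolding E_def using fin_X by auto
  have "E S \<inter> E T = {}" if "S \<in> C" "T \<in> C" "S \<noteq> T" for S T
  proof (rule ccontr)
    assume "E S \<inter> E T \<noteq> {}"
    then obtain A where A: "\<forall>(x, y)\<in>set S. (x \<in> A) = y" "\<forall>(x, y)\<in>set T. (x \<in> A) = y"
      unfolding E_def by blast
    have "adj S T" using cl that unfolding is_clique_def by blast
    from adj_imp_realizers_differ[OF this A] show False by simp
  qed
  then have card_Union: "card (\<Union>S\<in>C. E S) = (\<Sum>S\<in>C. card (E S))"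
    using fin fin_E by (intro card_UN_disjoint) auto
  have "card C * 2 ^ (card X - m) = (\<Sum>S\<in>C. 2 ^ (card X - m))" by simp
  also have "\<dots> \<le> (\<Sum>S\<in>C. card (E S))"
  proof (intro sum_mono)
    fix S assume S: "S \<in> C"
    then have "length S = m" "realizable H S"
      using cl unfolding is_clique_def vertices_def by auto
    moreover have "fst ` set S \<subseteq> X" unfolding X_def using S by blast
    ultimately show "2 ^ (card X - m) \<le> card (E S)"
      unfolding E_def realizable_def using card_consistent_subsets[OF fin_X] by blast
  qed
  also have "\<dots> \<le> card (Pow X)"
    unfolding card_Union[symmetric] using fin_X by (intro card_mono) (auto simp: E_def)
  also have "\<dots> = 2 ^ card X" using fin_X by (simp add: card_Pow)
  also have "\<dots> \<le> 2 ^ m * 2 ^ (card X - m)"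
    by (simp flip: power_add)
  finally show ?thesis by simp
qed

lemma card_le_from_restrictions:
  fixes F :: "('x \<Rightarrow> bool) set"
  assumes "finite Z" "finite F" "\<not> shatters_depth F (Suc d)"
    and "\<And>g e. \<not> shatters_depth {f\<in>F. \<forall>z\<in>Z. f z = g z} (Suc e) \<Longrightarrow>
               card {f\<in>F. \<forall>z\<in>Z. f z = g z} \<le> (n + 1) ^ e"
  shows "card F \<le> (n + card Z + 1) ^ d"
  using assms
proof (induction Z arbitrary: F d rule: finite_induct)
  case empty
  then show ?case by simp
next
  case (insert z Z F d)
  define F' where "F' b = {f\<in>F. f z = b}" for b
  let ?N = "n + card Z + 1"
  have IH: "card (F' b) \<le> ?N ^ e" if "\<not> shatters_depth (F' b) (Suc e)" for b e
  proof (rule insert.IH)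
    fix g e'
    have "{f\<in>F' b. \<forall>z'\<in>Z. f z' = g z'} = {f\<in>F. \<forall>z'\<in>insert z Z. f z' = (g(z := b)) z'}"
      using insert.hyps(2) unfolding F'_def by auto
    then show "\<not> shatters_depth {f\<in>F' b. \<forall>z'\<in>Z. f z' = g z'} (Suc e') \<Longrightarrow>
        card {f\<in>F' b. \<forall>z'\<in>Z. f z' = g z'} \<le> (n + 1) ^ e'"
      using insert.prems(3)[of "g(z := b)" e'] by simp
  qed (use that insert.prems(1) F'_def in auto)
  have card_F: "card F = card (F' b) + card (F' (\<not> b))" for b
    using insert.prems(1) unfolding F'_def
    by (subst card_Un_disjoint[symmetric]) (auto intro: arg_cong[where f = card])
  obtain b where b: "\<not> shatters_depth (F' b) d"
    using insert.prems(2) shatters_depth_SucI[of F z d] unfolding F'_def by blast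
  have not_b: "\<not> shatters_depth (F' (\<not> b)) (Suc d)"
    using insert.prems(2) shatters_depth_mono[of "F' (\<not> b)" F] unfolding F'_def by blast
  have card_insert: "card (insert z Z) = Suc (card Z)" using insert.hyps by simp
  show ?case
  proof (cases d)
    case 0
    then have "F' b = {}" using b shatters_depth_0 by blast
    then show ?thesis using card_F[of b] IH[OF not_b] 0 by simp
  next
    case (Suc d')
    have "card F \<le> ?N ^ d' + ?N ^ Suc d'"
      using card_F[of b] IH[of b d'] IH[OF not_b] b Suc by simp
    also have "\<dots> = (?N + 1) * ?N ^ d'" by simp
    also have "\<dots> \<le> (?N + 1) * (?N + 1) ^ d'" by (intro mult_le_mono2 power_mono) auto
    finally show ?thesis using Suc card_insert by simp
  qed
qed

text \<open>
  In the application, \<open>F\<close> consists of realizers of the members of a clique and \<open>D f\<close> is the set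
  of points of the dataset realized by \<open>f\<close>.
\<close>

definition conflicting_family ::
    "('x \<Rightarrow> bool) set \<Rightarrow> (('x \<Rightarrow> bool) \<Rightarrow> 'x set) \<Rightarrow> 'x set \<Rightarrow> nat \<Rightarrow> bool" where
  "conflicting_family F D Q k \<longleftrightarrow> finite F \<and>
     (\<forall>f\<in>F. \<forall>g\<in>F. f \<noteq> g \<longrightarrow> (\<exists>x\<in>D f \<inter> D g. f x \<noteq> g x)) \<and>
     (\<forall>f\<in>F. \<forall>g\<in>F. \<forall>x\<in>Q. f x = g x) \<and>
     (\<forall>f\<in>F. finite (D f) \<and> card (D f - Q) \<le> k)"

lemma conflicting_familyD:
  assumes "conflicting_family F D Q k"
  shows "finite F"
    and "f \<in> F \<Longrightarrow> g \<in> F \<Longrightarrow> f \<noteq> g \<Longrightarrow> \<exists>x\<in>D f \<inter> D g. f x \<noteq> g x"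
    and "f \<in> F \<Longrightarrow> g \<in> F \<Longrightarrow> x \<in> Q \<Longrightarrow> f x = g x"
    and "f \<in> F \<Longrightarrow> finite (D f)"
    and "f \<in> F \<Longrightarrow> card (D f - Q) \<le> k"
  using assms unfolding conflicting_family_def by simp_all

lemma conflicting_family_differ_outside:
  assumes fam: "conflicting_family F D Q k" and "f \<in> F" "f\<^sub>0 \<in> F" "f \<noteq> f\<^sub>0"
  shows "\<exists>x\<in>D f \<inter> (D f\<^sub>0 - Q). f x \<noteq> f\<^sub>0 x"
proof -
  obtain x where "x \<in> D f \<inter> D f\<^sub>0" "f x \<noteq> f\<^sub>0 x"
    using conflicting_familyD(2)[OF fam assms(2-4)] by blast
  moreover from this have "x \<notin> Q" using conflicting_familyD(3)[OF fam assms(2,3)] by blast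
  ultimately show ?thesis by blast
qed

lemma conflicting_family_0_card_le_1:
  assumes fam: "conflicting_family F D Q 0"
  shows "card F \<le> 1"
proof -
  have "f = g" if fg: "f \<in> F" "g \<in> F" for f g
  proof (rule ccontr)
    assume "f \<noteq> g"
    then obtain x where "x \<in> D f" "f x \<noteq> g x" using conflicting_familyD(2)[OF fam fg] by blast
    moreover have "D f \<subseteq> Q"
      using conflicting_familyD(4,5)[OF fam fg(1)] by simp
    ultimately show False using conflicting_familyD(3)[OF fam fg] by blast
  qed
  then show ?thesis using card_le_Suc0_iff_eq[OF conflicting_familyD(1)[OF fam]] by simp
qed

lemma conflicting_family_restrict:
  assumes fam: "conflicting_family F D Q (Suc k)" and f\<^sub>0: "f\<^sub>0 \<in> F"
    and f\<^sub>0_notin: "f\<^sub>0 \<notin> {f\<in>F. \<forall>z\<in>D f\<^sub>0 - Q. f z = g z}"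
  shows "conflicting_family {f\<in>F. \<forall>z\<in>D f\<^sub>0 - Q. f z = g z} D (Q \<union> (D f\<^sub>0 - Q)) k"
    (is "conflicting_family ?F D ?Q k")
proof -
  have "card (D f - ?Q) \<le> k" if f: "f \<in> ?F" for f
  proof -
    have "f \<in> F" "f \<noteq> f\<^sub>0" using f f\<^sub>0_notin by auto
    then obtain x where "x \<in> D f" "x \<in> D f\<^sub>0 - Q"
      using conflicting_family_differ_outside[OF fam _ f\<^sub>0] by blast
    then have "D f - ?Q \<subset> D f - Q" by blast
    then have "card (D f - ?Q) < card (D f - Q)"
      using conflicting_familyD(4)[OF fam \<open>f \<in> F\<close>] by (intro psubset_card_mono) auto
    then show ?thesis using conflicting_familyD(5)[OF fam \<open>f \<in> F\<close>] by simp
  qed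
  moreover have "f x = f' x" if "f \<in> ?F" "f' \<in> ?F" "x \<in> ?Q" for f f' x
    using that conflicting_familyD(3)[OF fam, of f f' x] by auto
  moreover have "\<exists>x\<in>D f \<inter> D f'. f x \<noteq> f' x" if "f \<in> ?F" "f' \<in> ?F" "f \<noteq> f'" for f f'
    using that conflicting_familyD(2)[OF fam, of f f'] by simp
  moreover have "finite (D f)" if "f \<in> ?F" for f
    using that conflicting_familyD(4)[OF fam, of f] by simp
  moreover have "finite ?F" using conflicting_familyD(1)[OF fam] by simp
  ultimately show ?thesis unfolding conflicting_family_def by blast
qed

lemma card_conflicting_family_le:
  assumes "conflicting_family F D Q k" "\<not> shatters_depth F (Suc d)"
  shows "card F \<le> (k * k + 1) ^ d"
  using assms
proof (induction k arbitrary: F Q d)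
  case 0
  then show ?case using conflicting_family_0_card_le_1 by simp
next
  case (Suc k)
  show ?case
  proof (cases "F = {}")
    case False
    then obtain f\<^sub>0 where f\<^sub>0: "f\<^sub>0 \<in> F" by blast
    define Z where "Z = D f\<^sub>0 - Q"
    have "card F \<le> (k * k + card Z + 1) ^ d"
    proof (rule card_le_from_restrictions)
      fix g e
      assume not_shatters: "\<not> shatters_depth {f\<in>F. \<forall>z\<in>Z. f z = g z} (Suc e)"
      show "card {f\<in>F. \<forall>z\<in>Z. f z = g z} \<le> (k * k + 1) ^ e"
      proof (cases "f\<^sub>0 \<in> {f\<in>F. \<forall>z\<in>Z. f z = g z}")
        case True
        then have "{f\<in>F. \<forall>z\<in>Z. f z = g z} \<subseteq> {f\<^sub>0}"
          using conflicting_family_differ_outside[OF Suc.prems(1) _ f\<^sub>0] unfolding Z_def by blast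
        then have "card {f\<in>F. \<forall>z\<in>Z. f z = g z} \<le> card {f\<^sub>0}" by (intro card_mono) auto
        also have "\<dots> \<le> (k * k + 1) ^ e" by simp
        finally show ?thesis .
      next
        case False
        then have "conflicting_family {f\<in>F. \<forall>z\<in>Z. f z = g z} D (Q \<union> Z) k"
          unfolding Z_def by (rule conflicting_family_restrict[OF Suc.prems(1) f\<^sub>0])
        from Suc.IH[OF this not_shatters] show ?thesis .
      qed
    next
      show "finite Z" "finite F"
        using conflicting_familyD(1,4)[OF Suc.prems(1)] f\<^sub>0 unfolding Z_def by auto
    qed (rule Suc.prems(2))
    also have "\<dots> \<le> (Suc k * Suc k + 1) ^ d"
    proof -
      have "card Z \<le> Suc k" using conflicting_familyD(5)[OF Suc.prems(1) f\<^sub>0] unfolding Z_def .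
      then show ?thesis by (intro power_mono) simp_all
    qed
    finally show ?thesis .
  qed simp
qed

lemma card_clique_le_poly:
  assumes cl: "is_clique H m C" and fin: "finite C" and not_shatters: "\<not> shatters_depth H (Suc d)"
  shows "card C \<le> (m * m + 1) ^ d"
proof -
  have "\<forall>S\<in>C. \<exists>h\<in>H. \<forall>(x, y)\<in>set S. h x = y"
    using cl unfolding is_clique_def vertices_def realizable_def by blast
  then obtain w where w_H: "\<And>S. S \<in> C \<Longrightarrow> w S \<in> H"
    and w_realizes: "\<And>S. S \<in> C \<Longrightarrow> \<forall>(x, y)\<in>set S. w S x = y"
    by metis
  have conflict: "\<exists>x\<in>fst ` set S \<inter> fst ` set T. w S x \<noteq> w T x"
    if "S \<in> C" "T \<in> C" "S \<noteq> T" for S T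
    using cl that unfolding is_clique_def
    by (intro adj_imp_realizers_differ w_realizes) auto
  have inj: "inj_on w C"
  proof (rule inj_onI)
    fix S T assume "S \<in> C" "T \<in> C" "w S = w T"
    then show "S = T" using conflict[of S T] by auto
  qed
  define D where "D f = fst ` set (inv_into C w f)" for f
  have D_w: "D (w S) = fst ` set S" if "S \<in> C" for S
    unfolding D_def using inv_into_f_f[OF inj that] by simp
  have "\<exists>x\<in>D f \<inter> D g. f x \<noteq> g x" if fg: "f \<in> w ` C" "g \<in> w ` C" "f \<noteq> g" for f g
  proof -
    obtain S T where "S \<in> C" "T \<in> C" "f = w S" "g = w T" using fg(1,2) by blast
    with fg(3) show ?thesis using conflict[of S T] D_w by auto
  qed
  moreover have "finite (D f) \<and> card (D f - {}) \<le> m" if f: "f \<in> w ` C" for f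
  proof -
    obtain S where "S \<in> C" "f = w S" using f by blast
    moreover have "card (fst ` set S) \<le> length S"
      using card_image_le card_length le_trans by blast
    ultimately show ?thesis using D_w cl unfolding is_clique_def vertices_def by auto
  qed
  ultimately have "conflicting_family (w ` C) D {} m"
    using fin unfolding conflicting_family_def by blast
  moreover have "\<not> shatters_depth (w ` C) (Suc d)"
    using not_shatters shatters_depth_mono[of "w ` C" H] w_H by blast
  ultimately have "card (w ` C) \<le> (m * m + 1) ^ d" by (rule card_conflicting_family_le)
  then show ?thesis using card_image[OF inj] by simp
qed

lemma omega_le_pow: "omega H m \<le> enat (2 ^ m)"
  unfolding omega_def by (auto intro!: Sup_least card_clique_le_pow)

lemma omega_le_poly:
  assumes "\<not> shatters_depth H (Suc d)"
  shows "omega H m \<le> enat ((m * m + 1) ^ d)"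
  unfolding omega_def using card_clique_le_poly[OF _ _ assms] by (auto intro!: Sup_least)

lemma omega_eq_pow_if_shatters_depth:
  assumes "shatters_depth H d"
  shows "omega H d = enat (2 ^ d)"
proof (rule antisym[OF omega_le_pow])
  obtain C where "finite C" "is_clique H d C" "card C = 2 ^ d"
    using shatters_depth_clique[OF assms] .
  then show "enat (2 ^ d) \<le> omega H d"
    unfolding omega_def by (force intro: Sup_upper)
qed

lemma polynomial_le_mult_pow2: "\<exists>K. \<forall>n. (n + 1) ^ c \<le> K * (2::nat) ^ n"
proof (induction c rule: less_induct)
  case (less c)
  show ?case
  proof (cases "c \<le> 1")
    case True
    have "(n + 1) ^ c \<le> 1 * (2::nat) ^ n" for n
    proof -
      have "(n + 1) ^ c \<le> (n + 1) ^ 1" using True by (intro power_increasing) auto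
      also have "\<dots> \<le> 2 ^ n" using Suc_leI[OF less_exp[of n]] by simp
      finally show ?thesis by simp
    qed
    then show ?thesis by blast
  next
    case False
    define a where "a = (c + 1) div 2"
    have a: "a < c" "c \<le> 2 * a" using False unfolding a_def by auto
    obtain K where K: "\<And>n. (n + 1) ^ a \<le> K * (2::nat) ^ n" using less.IH[OF a(1)] by blast
    have "(n + 1) ^ c \<le> (2 ^ (2 * a) * K ^ 2) * (2::nat) ^ n" for n
    proof -
      define j where "j = n div 2"
      have j: "n + 1 \<le> 2 * (j + 1)" "2 * j \<le> n" unfolding j_def by auto
      have "(n + 1) ^ c \<le> (n + 1) ^ (2 * a)" using a by (intro power_increasing) auto
      also have "\<dots> \<le> (2 * (j + 1)) ^ (2 * a)" using j by (intro power_mono) auto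
      also have "\<dots> = 2 ^ (2 * a) * ((j + 1) ^ a) ^ 2"
        by (metis power_mult_distrib power_mult mult.commute)
      also have "\<dots> \<le> 2 ^ (2 * a) * (K * 2 ^ j) ^ 2"
        using K[of j] by (intro mult_le_mono2 power_mono) simp_all
      also have "\<dots> = 2 ^ (2 * a) * (K ^ 2 * 2 ^ (2 * j))"
        by (metis power_mult_distrib power_mult mult.commute)
      also have "\<dots> \<le> 2 ^ (2 * a) * (K ^ 2 * 2 ^ n)"
        using j by (intro mult_le_mono2 power_increasing) auto
      finally show ?thesis by simp
    qed
    then show ?thesis by blast
  qed
qed

lemma finite_pow_le_poly: "finite {m::nat. 2 ^ m \<le> (m * m + 1) ^ d}"
proof -
  obtain K where K: "\<And>n. (n + 1) ^ (2 * d + 1) \<le> K * (2::nat) ^ n"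
    using polynomial_le_mult_pow2 by blast
  have "m + 1 \<le> K" if "2 ^ m \<le> (m * m + 1) ^ d" for m
  proof -
    have "(m * m + 1) ^ d \<le> ((m + 1) ^ 2) ^ d"
      by (intro power_mono) (simp_all add: power2_eq_square)
    with that have "(m + 1) * 2 ^ m \<le> (m + 1) * ((m + 1) ^ 2) ^ d"
      by (intro mult_le_mono2) linarith
    also have "\<dots> = (m + 1) ^ (2 * d + 1)" by (simp add: power_mult)
    also have "\<dots> \<le> K * 2 ^ m" by (rule K)
    finally show ?thesis using mult_le_cancel2[of "m + 1" "2 ^ m" K] by simp
  qed
  then have "{m. 2 ^ m \<le> (m * m + 1) ^ d} \<subseteq> {..K}" by force
  then show ?thesis using finite_subset by blast
qed

lemma Sup_enat_image_less_infinity_iff: "Sup (enat ` A) < \<infinity> \<longleftrightarrow> finite A"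
proof
  assume "Sup (enat ` A) < \<infinity>"
  then obtain n where "Sup (enat ` A) = enat n" using less_infinityE by blast
  then have "A \<subseteq> {..n}" by (metis Sup_upper atMost_iff enat_ord_simps(1) image_eqI subsetI)
  then show "finite A" using finite_subset by blast
next
  assume "finite A"
  then obtain n where "\<forall>a\<in>A. a \<le> n" unfolding finite_nat_set_iff_bounded_le by blast
  then have "Sup (enat ` A) \<le> enat n" by (auto intro!: Sup_least)
  then show "Sup (enat ` A) < \<infinity>" by (rule le_less_trans) simp
qed

theorem mainTheorem12:
  fixes H :: "('x \<Rightarrow> bool) set"
  shows "CD H < \<infinity> \<longleftrightarrow> LD H < \<infinity>"
proof -
  define M where "M = {m. omega H m = enat (2 ^ m)}"
  define Ds where "Ds = {d. shatters_depth H d}"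
  have CD_eq: "CD H = Sup (enat ` M)"
    unfolding CD_def M_def by (rule arg_cong[where f = Sup]) auto
  have LD_eq: "LD H = Sup (enat ` Ds)"
    unfolding LD_def Ds_def shatters_depth_def by (rule arg_cong[where f = Sup]) auto
  have "Ds \<subseteq> M"
    unfolding Ds_def M_def using omega_eq_pow_if_shatters_depth by blast
  moreover have "finite M" if "finite Ds"
  proof -
    from that obtain d where "\<forall>x\<in>Ds. x \<le> d"
      unfolding finite_nat_set_iff_bounded_le by blast
    then have "\<not> shatters_depth H (Suc d)" unfolding Ds_def using Suc_n_not_le_n by blast
    then have "2 ^ m \<le> (m * m + 1) ^ d" if "m \<in> M" for m
      using omega_le_poly[of H d m] that unfolding M_def by simp
    then have "M \<subseteq> {m. 2 ^ m \<le> (m * m + 1) ^ d}" by blast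
    then show ?thesis using finite_pow_le_poly finite_subset by blast
  qed
  ultimately show ?thesis
    unfolding CD_eq LD_eq Sup_enat_image_less_infinity_iff using finite_subset by blast
qed

end
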